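(* Let $\mathcal T$ be a $2$-deterministic $3$-automaton and let $x,y$ be infinite words such that the run $\gamma=q_0\xrightarrow{x,y|z}\cdots$ of $\mathcal T$ is accepting. If $y$ is normal, then there is a constant $K$ depending only on $\mathcal T$ such that for every factorization of $\gamma$ as a finite run $q_0\xrightarrow{u_1,v_1|w_1}q_1$ followed by an infinite run from $q_1$ with label $(x_1,y_1|z_1)$, with $|u_1|$ long enough, one has $|v_1|\le K|u_1|$.
   Context: A $3$-automaton is $\langle Q,A,\delta,I\rangle$ with finite state set $Q$, transitions $\delta\subseteq Q\times(A\cup\{\varepsilon\})^3\times Q$, initial states $I$. A run is a sequence of consecutive transitions; its label is the componentwise concatenation of transition labels; $p\xrightarrow{u_1,u_2|u_3}q$ denotes a finite run with label $(u_1,u_2,u_3)$. An infinite run is accepting if it starts in an initial state and all three label components are infinite. The automaton is $2$-deterministic if $I=\{q_0\}$ is a singleton and, for any two transitions from the same state with labels $(\alpha_1,\alpha_2,\alpha_3)$, $(\alpha'_1,\alpha'_2,\alpha'_3)$: $\alpha_j=\varepsilon$ for some $j\le2$ implies $\alpha'_j=\varepsilon$, and $\alpha_1=\alpha'_1,\alpha_2=\alpha'_2$ implies $\alpha_3=\alpha'_3$ and equal target states. It is assumed that no transition has both of its first two label components empty. An infinite word $y$ is normal if for every $\ell\ge1$ and $u\in A^\ell$, the number of occurrences of $u$ in $y[1..n]$ at positions $i\equiv1\bmod\ell$, divided by $n/\ell$, tends to $|A|^{-\ell}$. *)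

theory Defs
  imports Complex_Main
begin

text \<open>A transition (p, a1, a2, a3, q): source p, label components a1 a2 a3
  (None = empty word epsilon), target q.\<close>
type_synonym ('q, 'a) trans = "'q \<times> 'a option \<times> 'a option \<times> 'a option \<times> 'q"

fun src :: "('q, 'a) trans \<Rightarrow> 'q" where "src (p, a, b, c, q) = p"
fun tgt :: "('q, 'a) trans \<Rightarrow> 'q" where "tgt (p, a, b, c, q) = q"
fun lbl1 :: "('q, 'a) trans \<Rightarrow> 'a option" where "lbl1 (p, a, b, c, q) = a"
fun lbl2 :: "('q, 'a) trans \<Rightarrow> 'a option" where "lbl2 (p, a, b, c, q) = b"
fun lbl3 :: "('q, 'a) trans \<Rightarrow> 'a option" where "lbl3 (p, a, b, c, q) = c"

definition two_det_3aut :: "'q set \<Rightarrow> 'a set \<Rightarrow> ('q, 'a) trans set \<Rightarrow> 'q \<Rightarrow> bool" where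
  "two_det_3aut Q A delta q0 \<longleftrightarrow>
     finite Q \<and> finite A \<and> q0 \<in> Q \<and>
     (\<forall>t\<in>delta. src t \<in> Q \<and> tgt t \<in> Q \<and>
        set_option (lbl1 t) \<subseteq> A \<and> set_option (lbl2 t) \<subseteq> A \<and> set_option (lbl3 t) \<subseteq> A) \<and>
     (\<forall>t\<in>delta. \<not> (lbl1 t = None \<and> lbl2 t = None)) \<and>
     (\<forall>t\<in>delta. \<forall>t'\<in>delta. src t = src t' \<longrightarrow>
        (lbl1 t = None \<longrightarrow> lbl1 t' = None) \<and>
        (lbl2 t = None \<longrightarrow> lbl2 t' = None) \<and>
        (lbl1 t = lbl1 t' \<and> lbl2 t = lbl2 t' \<longrightarrow> lbl3 t = lbl3 t' \<and> tgt t = tgt t'))"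

definition prefix_label :: "(('q, 'a) trans \<Rightarrow> 'a option) \<Rightarrow> (nat \<Rightarrow> ('q, 'a) trans) \<Rightarrow> nat \<Rightarrow> 'a list" where
  "prefix_label cmp r n = concat (map (\<lambda>i. case cmp (r i) of None \<Rightarrow> [] | Some a \<Rightarrow> [a]) [0..<n])"

definition accepting_run :: "('q, 'a) trans set \<Rightarrow> 'q \<Rightarrow> (nat \<Rightarrow> ('q, 'a) trans) \<Rightarrow> bool" where
  "accepting_run delta q0 r \<longleftrightarrow>
     (\<forall>i. r i \<in> delta) \<and> src (r 0) = q0 \<and> (\<forall>i. tgt (r i) = src (r (Suc i))) \<and>
     infinite {i. lbl1 (r i) \<noteq> None} \<and> infinite {i. lbl2 (r i) \<noteq> None} \<and>
     infinite {i. lbl3 (r i) \<noteq> None}"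

definition run_label :: "(('q, 'a) trans \<Rightarrow> 'a option) \<Rightarrow> (nat \<Rightarrow> ('q, 'a) trans) \<Rightarrow> (nat \<Rightarrow> 'a) \<Rightarrow> bool" where
  "run_label cmp r w \<longleftrightarrow>
     (\<forall>n. \<forall>k < length (prefix_label cmp r n). w k = prefix_label cmp r n ! k)"

text \<open>Number of aligned occurrences of u (length l) in y[1..n]: positions i (0-indexed)
  with i mod l = 0 (i.e. 1-indexed position congruent to 1 mod l), fitting in the prefix.\<close>
definition aligned_occ :: "(nat \<Rightarrow> 'a) \<Rightarrow> 'a list \<Rightarrow> nat \<Rightarrow> nat" where
  "aligned_occ y u n = card {i. i + length u \<le> n \<and> i mod length u = 0 \<and>
                               map (\<lambda>k. y (i + k)) [0..<length u] = u}"

definition normal :: "'a set \<Rightarrow> (nat \<Rightarrow> 'a) \<Rightarrow> bool" where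
  "normal A y \<longleftrightarrow> (\<forall>l\<ge>1. \<forall>u. length u = l \<and> set u \<subseteq> A \<longrightarrow>
     ((\<lambda>n. real (aligned_occ y u n) / (real n / real l)) \<longlonglongrightarrow> 1 / real (card A) ^ l))"

end

theory Submission
  imports Defs
begin

text \<open>While the run reads nothing from x it is driven by y alone, through the partial
  deterministic automaton of the states all of whose transitions are silent on x. Since
  the run reads x infinitely often, every such state it visits is escaping: some word
  drives this y-automaton out of its domain. Each stretch of witness length avoids at least
  one word, so the words of a suitable length M along which the y-automaton stays among
  escaping states form a set B of density below 1/2. Cut the consumed prefix of y
  (length n) into aligned blocks of length M. A block consumed without reading x spells a word of B, and by
  normality there are fewer than n/(2M) such blocks; every other block contains a step
  reading x, and each such step is charged to at most two blocks. Hence n \<le> 6M|u|.\<close>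

text \<open>The y-automaton lives on the states having a transition silent on x; by
  2-determinism all their transitions are then silent on x and read a letter of y.\<close>

definition y_state :: "('q, 'a) trans set \<Rightarrow> 'q \<Rightarrow> bool" where
  "y_state d s \<longleftrightarrow> (\<exists>t\<in>d. src t = s \<and> lbl1 t = None)"

definition y_trans :: "('q, 'a) trans set \<Rightarrow> 'q \<Rightarrow> 'a \<Rightarrow> bool" where
  "y_trans d s a \<longleftrightarrow> (\<exists>t\<in>d. src t = s \<and> lbl1 t = None \<and> lbl2 t = Some a)"

definition y_next :: "('q, 'a) trans set \<Rightarrow> 'q \<Rightarrow> 'a \<Rightarrow> 'q" where
  "y_next d s a = tgt (SOME t. t \<in> d \<and> src t = s \<and> lbl1 t = None \<and> lbl2 t = Some a)"

fun y_target :: "('q, 'a) trans set \<Rightarrow> 'q \<Rightarrow> 'a list \<Rightarrow> 'q" where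
  "y_target d s [] = s"
| "y_target d s (a # w) = y_target d (y_next d s a) w"

fun y_reads_within :: "('q, 'a) trans set \<Rightarrow> 'q set \<Rightarrow> 'q \<Rightarrow> 'a list \<Rightarrow> bool" where
  "y_reads_within d E s [] \<longleftrightarrow> s \<in> E"
| "y_reads_within d E s (a # w) \<longleftrightarrow> s \<in> E \<and> y_trans d s a \<and> y_reads_within d E (y_next d s a) w"

abbreviation y_reads :: "('q, 'a) trans set \<Rightarrow> 'q \<Rightarrow> 'a list \<Rightarrow> bool" where
  "y_reads d \<equiv> y_reads_within d (Collect (y_state d))"

definition escaping :: "('q, 'a) trans set \<Rightarrow> 'a set \<Rightarrow> 'q set" where
  "escaping d A = {s. y_state d s \<and> (\<exists>w. set w \<subseteq> A \<and> \<not> y_reads d s w)}"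

definition confined_words :: "('q, 'a) trans set \<Rightarrow> 'q set \<Rightarrow> 'a set \<Rightarrow> nat \<Rightarrow> 'q \<Rightarrow> 'a list set" where
  "confined_words d E A j s = {w. length w = j \<and> set w \<subseteq> A \<and> y_reads_within d E s w}"

subsection \<open>Words confined to escaping states are rare\<close>

lemma y_reads_within_start: "y_reads_within d E s w \<Longrightarrow> s \<in> E"
  by (cases w) auto

lemma y_reads_within_append:
  "y_reads_within d E s (w1 @ w2) \<longleftrightarrow> y_reads_within d E s w1 \<and> y_reads_within d E (y_target d s w1) w2"
  by (induction w1 arbitrary: s) (auto dest: y_reads_within_start)

lemma y_reads_within_mono:
  "E \<subseteq> E' \<Longrightarrow> y_reads_within d E s w \<Longrightarrow> y_reads_within d E' s w"
  by (induction w arbitrary: s) auto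

lemma y_reads_within_prefix: "y_reads_within d E s (w @ v) \<Longrightarrow> y_reads_within d E s w"
  by (simp add: y_reads_within_append)

lemma finite_confined_words: "finite A \<Longrightarrow> finite (confined_words d E A j s)"
  unfolding confined_words_def
  by (rule finite_subset[OF _ finite_lists_length_eq[of A j]]) auto

lemma card_confined_words_witness:
  assumes "finite A" and "E \<subseteq> Collect (y_state d)" and "s \<in> E"
    and "set w \<subseteq> A" "length w \<le> m" "\<not> y_reads d s w"
  shows "card (confined_words d E A m s) \<le> card A ^ m - 1"
proof -
  have "w \<noteq> []" using assms(2,3,6) by auto
  then obtain a where a: "a \<in> A" using assms(4) by (cases w) auto
  define w' where "w' = w @ replicate (m - length w) a"
  have w': "w' \<in> {xs. set xs \<subseteq> A \<and> length xs = m}" using assms(4,5) a unfolding w'_def by auto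
  have "\<not> y_reads_within d E s w'"
  proof
    assume "y_reads_within d E s w'"
    then have "y_reads d s (w @ replicate (m - length w) a)"
      unfolding w'_def by (rule y_reads_within_mono[OF assms(2)])
    then show False using assms(6) by (blast dest: y_reads_within_prefix)
  qed
  then have "confined_words d E A m s \<subseteq> {xs. set xs \<subseteq> A \<and> length xs = m} - {w'}"
    unfolding confined_words_def by auto
  then have "card (confined_words d E A m s) \<le> card ({xs. set xs \<subseteq> A \<and> length xs = m} - {w'})"
    by (intro card_mono) (auto intro: finite_lists_length_eq[OF assms(1)])
  also have "\<dots> = card A ^ m - 1"
    using card_Diff_singleton[OF w'] card_lists_length_eq[OF assms(1)] by simp
  finally show ?thesis .
qed

lemma card_confined_words_le_power:
  assumes fin: "finite A"
    and wit: "\<forall>s\<in>E. \<exists>w. set w \<subseteq> A \<and> length w \<le> m \<and> \<not> y_reads d s w"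
    and E: "E \<subseteq> Collect (y_state d)" and s: "s \<in> E"
  shows "card (confined_words d E A (k * m) s) \<le> (card A ^ m - 1) ^ k"
  using s
proof (induction k arbitrary: s)
  case 0
  have "confined_words d E A (0 * m) s \<subseteq> {[]}" unfolding confined_words_def by auto
  then have "card (confined_words d E A (0 * m) s) \<le> card {[] :: 'a list}" by (intro card_mono) auto
  then show ?case by simp
next
  case (Suc k)
  let ?W = "confined_words d E A"
  let ?S = "SIGMA w1 : ?W m s. ?W (k * m) (y_target d s w1)"
  have sub: "?W (Suc k * m) s \<subseteq> (\<lambda>p. fst p @ snd p) ` ?S"
  proof
    fix w assume "w \<in> ?W (Suc k * m) s"
    then have "length w = m + k * m" "set w \<subseteq> A" "y_reads_within d E s (take m w @ drop m w)"
      unfolding confined_words_def by auto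
    then have "(take m w, drop m w) \<in> ?S"
      unfolding y_reads_within_append confined_words_def by (auto dest: in_set_takeD in_set_dropD)
    then show "w \<in> (\<lambda>p. fst p @ snd p) ` ?S" by (rule rev_image_eqI) simp
  qed
  have finS: "finite ?S" by (intro finite_SigmaI finite_confined_words[OF fin])
  have "card (?W (Suc k * m) s) \<le> card ((\<lambda>p. fst p @ snd p) ` ?S)"
    by (intro card_mono finite_imageI finS sub)
  also have "\<dots> \<le> card ?S" by (rule card_image_le[OF finS])
  also have "\<dots> = (\<Sum>w1\<in>?W m s. card (?W (k * m) (y_target d s w1)))"
    by (intro card_SigmaI ballI finite_confined_words[OF fin])
  also have "\<dots> \<le> (\<Sum>w1\<in>?W m s. (card A ^ m - 1) ^ k)"
  proof (rule sum_mono)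
    fix w1 assume "w1 \<in> ?W m s"
    then have "y_target d s w1 \<in> E"
      using y_reads_within_append[of d E s w1 "[]"] by (simp add: confined_words_def)
    then show "card (?W (k * m) (y_target d s w1)) \<le> (card A ^ m - 1) ^ k" by (rule Suc.IH)
  qed
  also have "\<dots> = card (?W m s) * (card A ^ m - 1) ^ k" by simp
  also have "\<dots> \<le> (card A ^ m - 1) * (card A ^ m - 1) ^ k"
  proof -
    obtain w where "set w \<subseteq> A" "length w \<le> m" "\<not> y_reads d s w" using wit Suc.prems by blast
    then have "card (?W m s) \<le> card A ^ m - 1"
      by (rule card_confined_words_witness[OF fin E Suc.prems])
    then show ?thesis by (rule mult_right_mono) simp
  qed
  finally show ?case by simp
qed

lemma ex_mult_power_Suc_less:
  fixes q c e :: real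
  assumes "0 \<le> q" "q < 1" "e > 0"
  shows "\<exists>k. c * q ^ Suc k < e"
proof -
  have "(\<lambda>k. q ^ k) \<longlonglongrightarrow> 0" using assms by (intro LIMSEQ_power_zero) simp
  then have "(\<lambda>k. c * q ^ k) \<longlonglongrightarrow> c * 0" by (intro tendsto_mult tendsto_const)
  then have "eventually (\<lambda>k. c * q ^ k < e) sequentially"
    using assms(3) by (intro order_tendstoD(2)) auto
  then obtain k0 where "\<And>k. k \<ge> k0 \<Longrightarrow> c * q ^ k < e" unfolding eventually_sequentially by blast
  then have "c * q ^ Suc k0 < e" by (meson le_SucI order_refl)
  then show ?thesis ..
qed

lemma normal_rare_words_eventually:
  assumes "normal A y" and "M \<ge> 1" and "finite B" and "\<forall>u\<in>B. length u = M \<and> set u \<subseteq> A"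
    and "real (card B) / real (card A) ^ M < 1/2"
  shows "eventually (\<lambda>n. 2 * (real M * real (\<Sum>u\<in>B. aligned_occ y u n)) < real n) sequentially"
proof -
  let ?dens = "\<lambda>n. \<Sum>u\<in>B. real (aligned_occ y u n) / (real n / real M)"
  have "?dens \<longlonglongrightarrow> (\<Sum>u\<in>B. 1 / real (card A) ^ M)"
    using assms(1-4) unfolding normal_def by (intro tendsto_sum) blast
  then have "eventually (\<lambda>n. ?dens n < 1/2 \<and> n > 0) sequentially"
    using assms(5) eventually_gt_at_top[of 0] by (intro eventually_conj order_tendstoD(2)) auto
  then show ?thesis
  proof (rule eventually_mono)
    fix n assume n: "?dens n < 1/2 \<and> n > 0"
    have "?dens n = real (\<Sum>u\<in>B. aligned_occ y u n) * real M / real n"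
      by (simp add: of_nat_sum sum_divide_distrib sum_distrib_right)
    with n have "real (\<Sum>u\<in>B. aligned_occ y u n) * real M / real n < 1/2" by simp
    then show "2 * (real M * real (\<Sum>u\<in>B. aligned_occ y u n)) < real n"
      using n by (simp add: divide_less_eq algebra_simps)
  qed
qed

lemma block_end_less:
  fixes j M n :: nat
  assumes "j < (n - 1) div M" shows "j * M + M < n"
proof -
  have "M > 0" using assms by (cases M) auto
  then have "Suc j * M \<le> n - 1"
    using assms less_eq_div_iff_mult_less_eq[of M "Suc j" "n - 1"] by (simp add: Suc_le_eq)
  then show ?thesis using assms by (cases n) auto
qed

lemma prefix_label_Suc:
  "prefix_label cmp r (Suc n) = prefix_label cmp r n @ (case cmp (r n) of None \<Rightarrow> [] | Some a \<Rightarrow> [a])"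
  unfolding prefix_label_def by simp

lemma length_prefix_label_Suc:
  "length (prefix_label cmp r (Suc n)) = length (prefix_label cmp r n) + (if cmp (r n) = None then 0 else 1)"
  unfolding prefix_label_Suc by (auto split: option.splits)

lemma length_prefix_label_eq_card:
  "length (prefix_label cmp r n) = card {i. i < n \<and> cmp (r i) \<noteq> None}"
proof (induction n)
  case 0 then show ?case by (simp add: prefix_label_def)
next
  case (Suc n)
  have "{i. i < Suc n \<and> cmp (r i) \<noteq> None} =
     {i. i < n \<and> cmp (r i) \<noteq> None} \<union> (if cmp (r n) = None then {} else {n})"
    by (auto simp: less_Suc_eq)
  then show ?case unfolding length_prefix_label_Suc Suc by auto
qed

lemma length_prefix_label_mono:
  "i \<le> j \<Longrightarrow> length (prefix_label cmp r i) \<le> length (prefix_label cmp r j)"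
  by (induction j) (auto simp: le_Suc_eq length_prefix_label_Suc)

subsection \<open>The y-automaton of a 2-deterministic 3-automaton\<close>

locale two_det_automaton =
  fixes Q :: "'q set" and A :: "'a set" and delta :: "('q, 'a) trans set" and q0 :: 'q
  assumes two_det: "two_det_3aut Q A delta q0"
begin

lemma finite_states: "finite Q" and finite_alphabet: "finite A"
  using two_det unfolding two_det_3aut_def by auto

lemma trans_in_alphabet:
  "t \<in> delta \<Longrightarrow> src t \<in> Q \<and> set_option (lbl1 t) \<subseteq> A \<and> set_option (lbl2 t) \<subseteq> A"
  using two_det unfolding two_det_3aut_def by blast

lemma trans_deterministic:
  "t \<in> delta \<Longrightarrow> t' \<in> delta \<Longrightarrow> src t = src t' \<Longrightarrow>
    (lbl1 t = None \<longrightarrow> lbl1 t' = None) \<and> (lbl1 t = lbl1 t' \<and> lbl2 t = lbl2 t' \<longrightarrow> tgt t = tgt t')"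
  using two_det unfolding two_det_3aut_def by blast

lemma src_in_states: "t \<in> delta \<Longrightarrow> src t \<in> Q"
  using trans_in_alphabet by blast

lemma lbl1_in_alphabet: "t \<in> delta \<Longrightarrow> lbl1 t = Some a \<Longrightarrow> a \<in> A"
  using trans_in_alphabet by fastforce

lemma lbl2_in_alphabet: "t \<in> delta \<Longrightarrow> lbl2 t = Some a \<Longrightarrow> a \<in> A"
  using trans_in_alphabet by fastforce

lemma lbl2_nonempty: "t \<in> delta \<Longrightarrow> lbl1 t = None \<Longrightarrow> lbl2 t \<noteq> None"
  using two_det unfolding two_det_3aut_def by blast

lemma not_y_state:
  assumes "t \<in> delta" "lbl1 t \<noteq> None" shows "\<not> y_state delta (src t)"
proof
  assume "y_state delta (src t)"
  then obtain t' where "t' \<in> delta" "src t' = src t" "lbl1 t' = None" unfolding y_state_def by blast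
  then show False using trans_deterministic[of t' t] assms by simp
qed

lemma y_next_eq:
  assumes "t \<in> delta" "src t = s" "lbl1 t = None" "lbl2 t = Some a"
  shows "y_next delta s a = tgt t"
proof -
  let ?P = "\<lambda>t. t \<in> delta \<and> src t = s \<and> lbl1 t = None \<and> lbl2 t = Some a"
  have "?P (SOME t. ?P t)" using assms by (intro someI[of ?P t]) auto
  then show ?thesis unfolding y_next_def using assms trans_deterministic[of "SOME t. ?P t" t] by simp
qed

lemma escaping_subset_y_state: "escaping delta A \<subseteq> Collect (y_state delta)"
  unfolding escaping_def by auto

lemma escaping_subset_states: "escaping delta A \<subseteq> Q"
  using src_in_states by (auto simp: escaping_def y_state_def)

lemma finite_escaping: "finite (escaping delta A)"
  using escaping_subset_states finite_states by (rule finite_subset)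

lemma card_escaping_le: "card (escaping delta A) \<le> card Q"
  using escaping_subset_states finite_states by (rule card_mono[rotated])

lemma escaping_witness_length_bound:
  "\<exists>m\<ge>1. \<forall>s\<in>escaping delta A. \<exists>w. set w \<subseteq> A \<and> length w \<le> m \<and> \<not> y_reads delta s w"
proof -
  have "\<forall>s\<in>escaping delta A. \<exists>w. set w \<subseteq> A \<and> \<not> y_reads delta s w"
    unfolding escaping_def by blast
  then obtain ws where ws: "\<forall>s\<in>escaping delta A. set (ws s) \<subseteq> A \<and> \<not> y_reads delta s (ws s)"
    by metis
  define m where "m = Max (insert 1 (length ` ws ` escaping delta A))"
  have "m \<ge> 1" "\<forall>s\<in>escaping delta A. length (ws s) \<le> m"
    unfolding m_def using finite_escaping by (auto intro: Max_ge)
  then show ?thesis using ws by blast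
qed

lemma card_confined_words_escaping_le:
  assumes wit: "\<forall>s\<in>escaping delta A. \<exists>w. set w \<subseteq> A \<and> length w \<le> m \<and> \<not> y_reads delta s w"
  shows "card (\<Union>s\<in>escaping delta A. confined_words delta (escaping delta A) A (k * m) s)
    \<le> card Q * (card A ^ m - 1) ^ k"
proof -
  let ?E = "escaping delta A"
  have "card (\<Union>s\<in>?E. confined_words delta ?E A (k * m) s)
      \<le> (\<Sum>s\<in>?E. card (confined_words delta ?E A (k * m) s))"
    using finite_escaping by (rule card_UN_le)
  also have "\<dots> \<le> (\<Sum>s\<in>?E. (card A ^ m - 1) ^ k)"
    using finite_alphabet wit escaping_subset_y_state
    by (intro sum_mono card_confined_words_le_power) auto
  also have "\<dots> \<le> card Q * (card A ^ m - 1) ^ k"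
    using card_escaping_le by (simp add: mult_right_mono)
  finally show ?thesis .
qed

lemma rare_confined_words:
  assumes "A \<noteq> {}"
  shows "\<exists>M B. M \<ge> 1 \<and> finite B \<and> (\<forall>u\<in>B. length u = M \<and> set u \<subseteq> A) \<and>
     real (card B) / real (card A) ^ M < 1/2 \<and>
     (\<forall>s\<in>escaping delta A. confined_words delta (escaping delta A) A M s \<subseteq> B)"
proof -
  let ?E = "escaping delta A"
  obtain m where m: "m \<ge> 1" and wit: "\<forall>s\<in>?E. \<exists>w. set w \<subseteq> A \<and> length w \<le> m \<and> \<not> y_reads delta s w"
    using escaping_witness_length_bound by blast
  define P where "P = card A ^ m"
  have P: "P \<ge> 1" unfolding P_def using assms finite_alphabet by (simp add: Suc_le_eq card_gt_0_iff)
  define q where "q = real (P - 1) / real P"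
  have "0 \<le> q" "q < 1" unfolding q_def using P by (auto simp: of_nat_diff)
  then obtain k0 where k0: "real (card Q) * q ^ Suc k0 < 1/2"
    using ex_mult_power_Suc_less[where c = "real (card Q)" and e = "1/2"] by auto
  define k where "k = Suc k0"
  define M where "M = k * m"
  define B where "B = (\<Union>s\<in>?E. confined_words delta ?E A M s)"
  have "card B \<le> card Q * (P - 1) ^ k"
    unfolding B_def M_def P_def using wit by (rule card_confined_words_escaping_le)
  then have "real (card B) \<le> real (card Q) * real (P - 1) ^ k"
    by (metis of_nat_le_iff of_nat_mult of_nat_power)
  moreover have "real (card A) ^ M = real P ^ k"
    unfolding M_def P_def by (simp add: power_mult[symmetric] mult.commute)
  ultimately have "real (card B) / real (card A) ^ M \<le> real (card Q) * q ^ k"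
    using P by (simp add: q_def power_divide divide_right_mono)
  then have "real (card B) / real (card A) ^ M < 1/2" using k0 unfolding k_def by (rule le_less_trans)
  moreover have "M \<ge> 1" unfolding M_def k_def using m by simp
  moreover have "finite B" unfolding B_def
    using finite_escaping finite_alphabet by (auto intro: finite_confined_words)
  moreover have "\<forall>u\<in>B. length u = M \<and> set u \<subseteq> A" unfolding B_def confined_words_def by blast
  moreover have "\<forall>s\<in>?E. confined_words delta ?E A M s \<subseteq> B" unfolding B_def by blast
  ultimately show ?thesis by (intro exI[of _ M] exI[of _ B] conjI) assumption+
qed

lemma accepting_run_alphabet_nonempty:
  assumes "accepting_run delta q0 r" shows "A \<noteq> {}"
proof -
  have r0: "r 0 \<in> delta" using assms unfolding accepting_run_def by blast
  show ?thesis
  proof (cases "lbl1 (r 0)")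
    case None
    then obtain b where "lbl2 (r 0) = Some b" using lbl2_nonempty[OF r0] by blast
    then show ?thesis using lbl2_in_alphabet[OF r0] by blast
  next
    case (Some a)
    then show ?thesis using lbl1_in_alphabet[OF r0] by blast
  qed
qed

end

subsection \<open>Blocks of y along an accepting run\<close>

locale accepting_automaton_run = two_det_automaton Q A delta q0
  for Q :: "'q set" and A :: "'a set" and delta q0 +
  fixes r y
  assumes accepting: "accepting_run delta q0 r" and y_label: "run_label lbl2 r y"
begin

abbreviation "xlen n \<equiv> length (prefix_label lbl1 r n)"
abbreviation "ylen n \<equiv> length (prefix_label lbl2 r n)"

lemma run_in_delta: "r i \<in> delta"
  and run_chain: "tgt (r i) = src (r (Suc i))"
  using accepting unfolding accepting_run_def by auto

lemma y_nth_label: assumes "lbl2 (r i) = Some a" shows "y (ylen i) = a"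
proof -
  have "prefix_label lbl2 r (Suc i) = prefix_label lbl2 r i @ [a]"
    using assms by (simp add: prefix_label_Suc)
  then show ?thesis
    using y_label unfolding run_label_def by (metis lessI length_append_singleton nth_append_length)
qed

lemma ylen_attains: "p \<le> ylen n \<Longrightarrow> \<exists>t. ylen t = p"
proof (induction n)
  case 0 then show ?case by (auto simp: prefix_label_def)
next
  case (Suc n)
  show ?case
  proof (cases "p \<le> ylen n")
    case False
    then have "p = ylen (Suc n)"
      using Suc.prems length_prefix_label_Suc[of lbl2 r n] by (auto split: if_splits)
    then show ?thesis by blast
  qed (use Suc.IH in blast)
qed

lemma ylen_x_silent_steps:
  "ylen t = p \<Longrightarrow> \<forall>k'<k. lbl1 (r (t + k')) = None \<Longrightarrow> ylen (t + k) = p + k"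
  using lbl2_nonempty run_in_delta
  by (induction k) (auto simp: length_prefix_label_Suc)

lemma x_silent_steps_escape:
  "i + d = t' \<Longrightarrow> \<forall>j. i \<le> j \<and> j < t' \<longrightarrow> lbl1 (r j) = None \<Longrightarrow> lbl1 (r t') \<noteq> None \<Longrightarrow>
   \<not> y_reads delta (src (r i)) (map (\<lambda>j. the (lbl2 (r j))) [i..<t'])"
proof (induction d arbitrary: i)
  case 0
  then show ?case using not_y_state run_in_delta by auto
next
  case (Suc d)
  from Suc.prems have split: "[i..<t'] = i # [Suc i..<t']" and l1: "lbl1 (r i) = None"
    by (auto simp: upt_conv_Cons)
  obtain a where a: "lbl2 (r i) = Some a" using lbl2_nonempty run_in_delta l1 by blast
  have "y_next delta (src (r i)) a = src (r (Suc i))"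
    using y_next_eq[OF run_in_delta refl l1 a] run_chain by simp
  moreover have "\<not> y_reads delta (src (r (Suc i))) (map (\<lambda>j. the (lbl2 (r j))) [Suc i..<t'])"
    using Suc.prems by (intro Suc.IH) auto
  ultimately show ?case unfolding split using a by simp
qed

text \<open>The segment up to the next step reading x is the escape witness.\<close>

lemma x_silent_source_escaping:
  assumes "lbl1 (r i) = None" shows "src (r i) \<in> escaping delta A"
proof -
  have "infinite {j. lbl1 (r j) \<noteq> None}" using accepting unfolding accepting_run_def by blast
  then obtain j where "i \<le> j" "lbl1 (r j) \<noteq> None"
    by (metis (mono_tags, lifting) finite_nat_set_iff_bounded mem_Collect_eq not_le)
  define t' where "t' = (LEAST j. i \<le> j \<and> lbl1 (r j) \<noteq> None)"
  have t': "i \<le> t'" "lbl1 (r t') \<noteq> None"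
    using LeastI[of "\<lambda>j. i \<le> j \<and> lbl1 (r j) \<noteq> None"] \<open>i \<le> j\<close> \<open>lbl1 (r j) \<noteq> None\<close>
    unfolding t'_def by auto
  have silent: "\<forall>j. i \<le> j \<and> j < t' \<longrightarrow> lbl1 (r j) = None"
    using not_less_Least[of _ "\<lambda>j. i \<le> j \<and> lbl1 (r j) \<noteq> None"] unfolding t'_def by blast
  have "set (map (\<lambda>j. the (lbl2 (r j))) [i..<t']) \<subseteq> A"
  proof
    fix a assume "a \<in> set (map (\<lambda>j. the (lbl2 (r j))) [i..<t'])"
    then obtain j where j: "i \<le> j" "j < t'" "a = the (lbl2 (r j))" by auto
    then obtain b where "lbl2 (r j) = Some b" using silent lbl2_nonempty run_in_delta by blast
    then show "a \<in> A" using j lbl2_in_alphabet[OF run_in_delta] by simp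
  qed
  moreover have "y_state delta (src (r i))" using assms run_in_delta unfolding y_state_def by blast
  moreover have "\<not> y_reads delta (src (r i)) (map (\<lambda>j. the (lbl2 (r j))) [i..<t'])"
    using x_silent_steps_escape[of i "t' - i" t'] t' silent by simp
  ultimately show ?thesis unfolding escaping_def by blast
qed

definition block_start :: "nat \<Rightarrow> nat \<Rightarrow> nat" where
  "block_start M j = (SOME t. ylen t = j * M)"

lemma ylen_block_start: "j * M \<le> ylen N \<Longrightarrow> ylen (block_start M j) = j * M"
  unfolding block_start_def by (rule someI_ex) (rule ylen_attains)

definition clean_block :: "nat \<Rightarrow> nat \<Rightarrow> bool" where
  "clean_block M j \<longleftrightarrow> (\<forall>k\<le>M. lbl1 (r (block_start M j + k)) = None)"

lemma x_silent_segment_confined: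
  assumes Yt: "ylen t = p" and silent: "\<forall>k\<le>M. lbl1 (r (t + k)) = None"
  shows "map (\<lambda>i. y (p + i)) [0..<M] \<in> confined_words delta (escaping delta A) A M (src (r t))"
proof -
  have lbl2: "lbl2 (r (t + k)) = Some (y (p + k))" if "k \<le> M" for k
  proof -
    have "lbl2 (r (t + k)) \<noteq> None" using lbl2_nonempty[OF run_in_delta] silent that by blast
    then obtain a where a: "lbl2 (r (t + k)) = Some a" by blast
    have "ylen (t + k) = p + k" using ylen_x_silent_steps[OF Yt, of k] silent that by auto
    then show ?thesis using y_nth_label[OF a] a by simp
  qed
  have reads: "y_reads_within delta (escaping delta A) (src (r (t + i))) (map (\<lambda>i. y (p + i)) [i..<M])"
    if "i \<le> M" for i
    using that
  proof (induction "M - i" arbitrary: i)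
    case 0
    then have "i = M" by simp
    then show ?case using x_silent_source_escaping silent by simp
  next
    case (Suc d)
    then have iM: "i < M" by simp
    have l1: "lbl1 (r (t + i)) = None" using silent iM by simp
    have "y_next delta (src (r (t + i))) (y (p + i)) = src (r (t + Suc i))"
      using y_next_eq[OF run_in_delta refl l1 lbl2] run_chain[of "t + i"] iM by simp
    moreover have "y_trans delta (src (r (t + i))) (y (p + i))"
      using run_in_delta l1 lbl2[of i] iM unfolding y_trans_def by force
    moreover have "y_reads_within delta (escaping delta A) (src (r (t + Suc i)))
        (map (\<lambda>i. y (p + i)) [Suc i..<M])"
      using Suc.hyps(1)[of "Suc i"] Suc.hyps(2) iM by simp
    moreover have "[i..<M] = i # [Suc i..<M]" using iM by (simp add: upt_conv_Cons)
    ultimately show ?case using x_silent_source_escaping[OF l1] by simp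
  qed
  have "set (map (\<lambda>i. y (p + i)) [0..<M]) \<subseteq> A"
  proof
    fix a assume "a \<in> set (map (\<lambda>i. y (p + i)) [0..<M])"
    then obtain i where "i < M" "a = y (p + i)" by auto
    then show "a \<in> A" using lbl2[of i] lbl2_in_alphabet[OF run_in_delta] by simp
  qed
  then show ?thesis using reads[of 0] unfolding confined_words_def by simp
qed

lemma card_clean_blocks_le:
  assumes M: "M \<ge> 1" and confined: "\<forall>s\<in>escaping delta A. confined_words delta (escaping delta A) A M s \<subseteq> B"
    and fin: "finite B" and B: "\<forall>u\<in>B. length u = M"
  shows "card {j. j < (ylen N - 1) div M \<and> clean_block M j} \<le> (\<Sum>u\<in>B. aligned_occ y u (ylen N))"
proof -
  define n where "n = ylen N"
  let ?C = "{j. j < (n - 1) div M \<and> clean_block M j}"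
  let ?occ = "\<lambda>u. {i. i + M \<le> n \<and> i mod M = 0 \<and> map (\<lambda>k. y (i + k)) [0..<M] = u}"
  have sub: "(\<lambda>j. j * M) ` ?C \<subseteq> (\<Union>u\<in>B. ?occ u)"
  proof
    fix i assume "i \<in> (\<lambda>j. j * M) ` ?C"
    then obtain j where j: "j < (n - 1) div M" "clean_block M j" and i: "i = j * M" by blast
    have jM: "j * M + M \<le> n" using block_end_less[OF j(1)] by simp
    then have "ylen (block_start M j) = j * M" using ylen_block_start[of j M N] unfolding n_def by simp
    then have "map (\<lambda>k. y (j * M + k)) [0..<M]
        \<in> confined_words delta (escaping delta A) A M (src (r (block_start M j)))"
      using j(2) unfolding clean_block_def by (rule x_silent_segment_confined)
    moreover have "src (r (block_start M j)) \<in> escaping delta A"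
      using j(2) unfolding clean_block_def by (intro x_silent_source_escaping) (metis add_0_right le0)
    ultimately have "map (\<lambda>k. y (j * M + k)) [0..<M] \<in> B" using confined by blast
    then show "i \<in> (\<Union>u\<in>B. ?occ u)" using jM i by auto
  qed
  have "inj_on (\<lambda>j. j * M) ?C" using M by (auto intro: inj_onI)
  then have "card ?C = card ((\<lambda>j. j * M) ` ?C)" by (rule card_image[symmetric])
  also have "\<dots> \<le> card (\<Union>u\<in>B. ?occ u)"
    by (rule card_mono[OF finite_subset[of _ "{..n}"] sub]) auto
  also have "\<dots> \<le> (\<Sum>u\<in>B. card (?occ u))" by (rule card_UN_le[OF fin])
  also have "\<dots> = (\<Sum>u\<in>B. aligned_occ y u n)" using B by (auto simp: aligned_occ_def)
  finally show ?thesis unfolding n_def .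
qed

text \<open>A dirty block is charged to its first step reading x; the step lies at y-position
  jM + k with k \<le> M, so only block j and, when k = M, block j + 1 share it.\<close>

lemma first_x_step_of_dirty_block:
  assumes j: "j < (ylen N - 1) div M" and dirty: "\<not> clean_block M j"
  obtains k where "k \<le> M" "lbl1 (r (block_start M j + k)) \<noteq> None"
    "ylen (block_start M j + k) = j * M + k" "block_start M j + k < N"
proof -
  let ?P = "\<lambda>k. k \<le> M \<and> lbl1 (r (block_start M j + k)) \<noteq> None"
  define k where "k = (LEAST k. ?P k)"
  have "\<exists>k. ?P k" using dirty unfolding clean_block_def by blast
  then have k: "?P k" unfolding k_def by (rule LeastI_ex)
  have silent: "\<forall>k'<k. lbl1 (r (block_start M j + k')) = None"
  proof (intro allI impI)
    fix k' assume "k' < k"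
    then have "\<not> ?P k'" unfolding k_def by (rule not_less_Least)
    then show "lbl1 (r (block_start M j + k')) = None" using \<open>k' < k\<close> k by simp
  qed
  have fits: "j * M + M < ylen N" using block_end_less[OF j] .
  then have "ylen (block_start M j) = j * M" using ylen_block_start[of j M N] by simp
  then have Yk: "ylen (block_start M j + k) = j * M + k" using silent by (rule ylen_x_silent_steps)
  have "block_start M j + k < N"
  proof (rule ccontr)
    assume "\<not> block_start M j + k < N"
    then have "ylen N \<le> ylen (block_start M j + k)" by (intro length_prefix_label_mono) simp
    then show False using Yk fits k by simp
  qed
  then show ?thesis using that k Yk by blast
qed

lemma card_dirty_blocks_le:
  assumes M: "M \<ge> 1"
  shows "card {j. j < (ylen N - 1) div M \<and> \<not> clean_block M j} \<le> 2 * xlen N"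
proof -
  let ?D = "{j. j < (ylen N - 1) div M \<and> \<not> clean_block M j}"
  let ?X = "{i. i < N \<and> lbl1 (r i) \<noteq> None}"
  have "\<forall>j\<in>?D. \<exists>k. k \<le> M \<and> block_start M j + k \<in> ?X \<and> ylen (block_start M j + k) = j * M + k"
  proof
    fix j assume "j \<in> ?D"
    then have "j < (ylen N - 1) div M" "\<not> clean_block M j" by simp_all
    then obtain k where "k \<le> M" "lbl1 (r (block_start M j + k)) \<noteq> None"
      "ylen (block_start M j + k) = j * M + k" "block_start M j + k < N"
      by (rule first_x_step_of_dirty_block)
    then show "\<exists>k. k \<le> M \<and> block_start M j + k \<in> ?X \<and> ylen (block_start M j + k) = j * M + k"
      by blast
  qed
  then obtain k where k: "\<forall>j\<in>?D.
      k j \<le> M \<and> block_start M j + k j \<in> ?X \<and> ylen (block_start M j + k j) = j * M + k j"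
    by (rule bchoice[THEN exE])
  let ?g = "\<lambda>j. (block_start M j + k j, k j = M)"
  have "inj_on ?g ?D"
  proof (rule inj_onI)
    fix j j' assume j: "j \<in> ?D" and j': "j' \<in> ?D" and eq: "?g j = ?g j'"
    have kj: "k j \<le> M" "ylen (block_start M j + k j) = j * M + k j" using k j by auto
    have kj': "k j' \<le> M" "ylen (block_start M j' + k j') = j' * M + k j'" using k j' by auto
    from eq have "ylen (block_start M j + k j) = ylen (block_start M j' + k j')" by simp
    then have e: "j * M + k j = j' * M + k j'" using kj kj' by simp
    show "j = j'"
    proof (cases "k j = M")
      case True
      then have "k j' = M" using eq by simp
      then show ?thesis using e True M by simp
    next
      case False
      then have lt: "k j < M" "k j' < M" using eq kj(1) kj'(1) by auto
      have "j = (j * M + k j) div M" using lt(1) by simp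
      also have "\<dots> = (j' * M + k j') div M" by (simp only: e)
      also have "\<dots> = j'" using lt(2) by simp
      finally show ?thesis .
    qed
  qed
  then have "card ?D = card (?g ` ?D)" by (simp add: card_image)
  also have "\<dots> \<le> card (?X \<times> (UNIV :: bool set))" using k by (intro card_mono) auto
  also have "\<dots> = 2 * xlen N" by (simp add: card_cartesian_product length_prefix_label_eq_card)
  finally show ?thesis .
qed

lemma y_consumption_le_blocks:
  assumes M: "M \<ge> 1" and confined: "\<forall>s\<in>escaping delta A. confined_words delta (escaping delta A) A M s \<subseteq> B"
    and fin: "finite B" and B: "\<forall>u\<in>B. length u = M"
  shows "ylen N \<le> M * ((\<Sum>u\<in>B. aligned_occ y u (ylen N)) + 2 * xlen N) + M"
proof -
  define w where "w = (ylen N - 1) div M"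
  have "w = card {j. j < w}" by simp
  also have "{j. j < w} = {j. j < w \<and> clean_block M j} \<union> {j. j < w \<and> \<not> clean_block M j}" by auto
  also have "card \<dots> = card {j. j < w \<and> clean_block M j} + card {j. j < w \<and> \<not> clean_block M j}"
    by (rule card_Un_disjoint) auto
  finally have "w \<le> (\<Sum>u\<in>B. aligned_occ y u (ylen N)) + 2 * xlen N"
    using card_clean_blocks_le[OF M confined fin B, of N, folded w_def]
      card_dirty_blocks_le[OF M, of N, folded w_def] by linarith
  then have "Suc w * M \<le> M * ((\<Sum>u\<in>B. aligned_occ y u (ylen N)) + 2 * xlen N) + M"
    by (simp add: mult.commute)
  moreover have "ylen N - 1 < Suc w * M"
    using div_less_iff_less_mult[of M "ylen N - 1" "Suc w"] M unfolding w_def by simp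
  ultimately show ?thesis by linarith
qed

lemma y_consumption_linear:
  assumes M: "M \<ge> 1" and confined: "\<forall>s\<in>escaping delta A. confined_words delta (escaping delta A) A M s \<subseteq> B"
    and fin: "finite B" and B: "\<forall>u\<in>B. length u = M \<and> set u \<subseteq> A"
    and rare: "real (card B) / real (card A) ^ M < 1/2" and normal: "normal A y"
  shows "\<exists>N. \<forall>n. N \<le> xlen n \<longrightarrow> real (ylen n) \<le> 6 * real M * real (xlen n)"
proof -
  obtain N0 where N0: "\<And>n. n \<ge> N0 \<Longrightarrow> 2 * (real M * real (\<Sum>u\<in>B. aligned_occ y u n)) < real n"
    using normal_rare_words_eventually[OF normal M fin B rare] unfolding eventually_sequentially by blast
  have "real (ylen n) \<le> 6 * (real M * real (xlen n))" if X: "Suc N0 \<le> xlen n" for n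
  proof -
    have MX: "real M \<le> real M * real (xlen n)"
      using mult_left_mono[of 1 "real (xlen n)" "real M"] X by simp
    have XMX: "real (xlen n) \<le> real M * real (xlen n)"
      using mult_right_mono[of 1 "real M" "real (xlen n)"] M by simp
    show ?thesis
    proof (cases "ylen n < N0")
      case True
      then show ?thesis using X XMX by simp
    next
      case False
      let ?S = "real (\<Sum>u\<in>B. aligned_occ y u (ylen n))"
      have "real (ylen n) \<le> real M * (?S + 2 * real (xlen n)) + real M"
        using y_consumption_le_blocks[OF M confined fin, of n] B
        by (metis (no_types, lifting) of_nat_add of_nat_le_iff of_nat_mult of_nat_numeral)
      moreover have "2 * (real M * ?S) < real (ylen n)" using N0 False by simp
      moreover have "real M * (?S + 2 * real (xlen n)) = real M * ?S + 2 * (real M * real (xlen n))"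
        by (simp add: algebra_simps)
      ultimately show ?thesis using MX by linarith
    qed
  qed
  then show ?thesis by (metis mult.assoc)
qed

end

theorem lemma18:
  fixes Q :: "'q set" and A :: "'a set" and delta :: "('q, 'a) trans set" and q0 :: 'q
  assumes "two_det_3aut Q A delta q0"
  shows "\<exists>K::real. \<forall>x y z r.
           accepting_run delta q0 r \<and> run_label lbl1 r x \<and> run_label lbl2 r y \<and>
           run_label lbl3 r z \<and> normal A y \<longrightarrow>
           (\<exists>N. \<forall>n. N \<le> length (prefix_label lbl1 r n) \<longrightarrow>
              real (length (prefix_label lbl2 r n)) \<le> K * real (length (prefix_label lbl1 r n)))"
proof -
  interpret two_det_automaton Q A delta q0 by (rule two_det_automaton.intro[OF assms])
  show ?thesis
  proof (cases "A = {}")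
    case True
    then show ?thesis using accepting_run_alphabet_nonempty by blast
  next
    case False
    then obtain M B where MB: "M \<ge> 1" "finite B" "\<forall>u\<in>B. length u = M \<and> set u \<subseteq> A"
      "real (card B) / real (card A) ^ M < 1/2"
      "\<forall>s\<in>escaping delta A. confined_words delta (escaping delta A) A M s \<subseteq> B"
      using rare_confined_words by blast
    have "\<exists>N. \<forall>n. N \<le> length (prefix_label lbl1 r n) \<longrightarrow>
        real (length (prefix_label lbl2 r n)) \<le> 6 * real M * real (length (prefix_label lbl1 r n))"
      if "accepting_run delta q0 r" "run_label lbl2 r y" "normal A y" for r y
      using accepting_automaton_run.y_consumption_linear[OF _ MB(1,5,2,3,4)] that assms
      by (simp add: accepting_automaton_run_def accepting_automaton_run_axioms_def two_det_automaton_def)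
    then show ?thesis by blast
  qed
qed

end
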